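(* Let $\Lambda=\operatorname{diag}(\lambda_1,\dots,\lambda_n)$, $\bar\mu\in\mathbb{R}^n$, let $\mathcal{C}$ be a constant positive definite $n\times n$ matrix, and take $a(x)=\Lambda(\bar\mu-x)$ on $\mathcal{U}=\mathbb{R}^n$ (multivariate Ornstein–Uhlenbeck model), with $\kappa\neq-1$ a real constant. Then there is $T_0>0$ such that for $T\le T_0$ the Hamilton–Jacobi equation $$\partial_tS^0+\tfrac{\kappa+1}{2}(\nabla S^0)^T\mathcal{C}\nabla S^0+(\kappa+1)a^T\nabla S^0+\tfrac{\kappa}{2}a^T\mathcal{C}^{-1}a=0,\qquad S^0(T,\cdot)=0,$$ has a solution $S^0(t,x)$ that is a quadratic polynomial in $x$ with $t$-dependent coefficients, and setting $S^1(t)=\frac12\int_t^T\operatorname{tr}\big(\mathcal{C}\nabla^2S^0(s,\cdot)\big)ds$ (which is independent of $x$), the function $S=S^0+S^1$ solves exactly $$\partial_tS+(\kappa+1)a^T\nabla S+\tfrac{\kappa+1}{2}(\nabla S)^T\mathcal{C}\nabla S+\tfrac{\kappa}{2}a^T\mathcal{C}^{-1}a+\tfrac12\operatorname{tr}(\mathcal{C}\nabla^2S)=0,\qquad S(T,\cdot)=0.$$ Consequently all higher WKB corrections $S^j$, $j\ge2$, vanish and the optimal control is $\varphi^*=\frac{1}{A_U(w)}\big(\mathcal{C}^{-1}\Lambda(\bar\mu-x)+\nabla S^0(t,x)\big)$.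
   Context: $\Gamma=e^{S}$ is the function in the representation $J(t,x,w)=\Gamma(t,x)U(w)$ of the value function; $A_U(w)=-U''(w)/U'(w)$; $\nabla,\nabla^2$ are gradient and Hessian in $x$. *)

theory Defs
  imports "HOL-Analysis.Analysis"
begin

definition diag_mat :: "real^'n \<Rightarrow> real^'n^'n" where
  "diag_mat l = (\<chi> i j. if i = j then l $ i else 0)"

definition pos_def_mat :: "real^'n^'n \<Rightarrow> bool" where
  "pos_def_mat C \<longleftrightarrow> transpose C = C \<and> (\<forall>v. v \<noteq> 0 \<longrightarrow> v \<bullet> (C *v v) > 0)"

definition grad :: "(real^'n \<Rightarrow> real) \<Rightarrow> real^'n \<Rightarrow> real^'n" where
  "grad f x = (\<chi> i. deriv (\<lambda>h. f (x + h *\<^sub>R axis i 1)) 0)"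

definition hess :: "(real^'n \<Rightarrow> real) \<Rightarrow> real^'n \<Rightarrow> real^'n^'n" where
  "hess f x = (\<chi> i j. deriv (\<lambda>h. grad f (x + h *\<^sub>R axis j 1) $ i) 0)"

definition dt :: "real \<Rightarrow> (real \<Rightarrow> real^'n \<Rightarrow> real) \<Rightarrow> real \<Rightarrow> real^'n \<Rightarrow> real" where
  "dt T f t x = vector_derivative (\<lambda>s. f s x) (at t within {0..T})"

end

theory Submission
  imports Defs
begin

text \<open>
  For S0 t x = x \<bullet> Q t x + b t \<bullet> x + c t the gradient (Q + Q^T) x + b is affine in x, so the
  Hamiltonian evaluated at it is again a quadratic polynomial in x, whose coefficients are a
  quadratic polynomial map F of (Q, b, c). The Hamilton-Jacobi equation therefore holds
  identically in x as soon as the coefficients solve the Riccati system z' = -F(z), z(T) = 0.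
  F is Lipschitz on the unit ball, so Picard's iteration (Banach's fixed point theorem on bounded
  continuous functions) solves z' = F(z), z(0) = 0 on some [0, \<delta>]; as the system is autonomous,
  reflecting this one solution at T solves the terminal value problem for every T \<le> \<delta>.
  Finally the Hessian of S0 is Q + Q^T, independent of x, so S1 depends on t only: it does
  not change gradient or Hessian, and its time derivative cancels the trace term.
\<close>

section \<open>Local solutions of autonomous ODEs\<close>

lemma lipschitz_on_cball_norm_le:
  fixes g :: "'a::real_normed_vector \<Rightarrow> 'b::real_normed_vector"
  assumes lip: "K-lipschitz_on (cball 0 r) g" and x: "x \<in> cball 0 r"
  shows "norm (g x) \<le> norm (g 0) + K * r"
proof -
  have "0 \<in> cball 0 r"
    using x norm_ge_zero[of x] by (simp del: norm_ge_zero)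
  from lipschitz_onD[OF lip x this] have "norm (g x - g 0) \<le> K * norm x"
    by (simp add: dist_norm)
  also have "\<dots> \<le> K * r"
    using x lipschitz_on_nonneg[OF lip] by (simp add: mult_left_mono)
  finally show ?thesis
    using norm_triangle_ineq[of "g 0" "g x - g 0"] by simp
qed

text \<open>
  Clamping s to [0, \<delta>] extends the Picard iterate to a bounded continuous function on all of
  the real line, so that its fixed point can be sought in the complete space of such functions.
\<close>
definition picard_map :: "real \<Rightarrow> ('a::banach \<Rightarrow> 'a) \<Rightarrow> (real \<Rightarrow>\<^sub>C 'a) \<Rightarrow> real \<Rightarrow> 'a"
  where "picard_map \<delta> g u s = integral {0..clamp 0 \<delta> s} (\<lambda>r. g (u r))"

lemma clamp_real_mem: "0 \<le> (\<delta>::real) \<Longrightarrow> clamp 0 \<delta> s \<in> {0..\<delta>}"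
  using clamp_in_interval[of 0 \<delta> s] by simp

lemma clamp_real_cancel: "s \<in> {0..(\<delta>::real)} \<Longrightarrow> clamp 0 \<delta> s = s"
  by simp

lemma continuous_on_lipschitz_comp:
  fixes g :: "'a::real_normed_vector \<Rightarrow> 'b::real_normed_vector"
  assumes "K-lipschitz_on (cball 0 1) g" and "u \<in> PiC UNIV (\<lambda>_. cball 0 1)"
  shows "continuous_on S (\<lambda>r. g (u r))"
  by (rule continuous_on_compose2[OF lipschitz_on_continuous_on[OF assms(1)]])
    (use assms(2) in \<open>auto simp: mem_PiC_iff\<close>)

lemma picard_map_bcontfun:
  fixes g :: "'a::banach \<Rightarrow> 'a"
  assumes lip: "K-lipschitz_on (cball 0 1) g" and "0 \<le> \<delta>" and u: "u \<in> PiC UNIV (\<lambda>_. cball 0 1)"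
  shows "picard_map \<delta> g u \<in> bcontfun" and "norm (picard_map \<delta> g u s) \<le> \<delta> * (norm (g 0) + K)"
proof -
  have gu: "continuous_on S (\<lambda>r. g (u r))" for S
    by (rule continuous_on_lipschitz_comp[OF lip u])
  have bound: "norm (picard_map \<delta> g u s) \<le> \<delta> * (norm (g 0) + K)" for s
  proof -
    have "norm (picard_map \<delta> g u s) \<le> (norm (g 0) + K) * (clamp 0 \<delta> s - 0)"
      unfolding picard_map_def
    proof (rule integral_bound)
      show "0 \<le> clamp 0 \<delta> s"
        using clamp_real_mem[OF \<open>0 \<le> \<delta>\<close>] by auto
      show "norm (g (u r)) \<le> norm (g 0) + K" for r
        using lipschitz_on_cball_norm_le[OF lip, of "u r"] u by (simp add: mem_PiC_iff Pi_iff)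
    qed (rule gu)
    also have "\<dots> \<le> \<delta> * (norm (g 0) + K)"
      using clamp_real_mem[OF \<open>0 \<le> \<delta>\<close>, of s] lipschitz_on_nonneg[OF lip]
      by (simp add: mult.commute[of \<delta>] mult_left_mono)
    finally show ?thesis .
  qed
  have "continuous_on {0..\<delta>} (\<lambda>t. integral {0..t} (\<lambda>r. g (u r)))"
    by (intro indefinite_integral_continuous_1 integrable_continuous_real gu)
  then have "continuous_on UNIV (picard_map \<delta> g u)"
    unfolding picard_map_def[abs_def] by (intro clamp_continuous_on) simp
  then show "picard_map \<delta> g u \<in> bcontfun"
    using bound by (rule bcontfun_normI)
  show "norm (picard_map \<delta> g u s) \<le> \<delta> * (norm (g 0) + K)"
    by (rule bound)
qed

lemma norm_picard_map_diff_le: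
  fixes g :: "'a::banach \<Rightarrow> 'a"
  assumes lip: "K-lipschitz_on (cball 0 1) g" and "0 \<le> \<delta>"
    and u: "u \<in> PiC UNIV (\<lambda>_. cball 0 1)" and v: "v \<in> PiC UNIV (\<lambda>_. cball 0 1)"
  shows "norm (picard_map \<delta> g u s - picard_map \<delta> g v s) \<le> \<delta> * K * dist u v"
proof -
  let ?t = "clamp 0 \<delta> s"
  have t: "?t \<in> {0..\<delta>}"
    by (rule clamp_real_mem[OF \<open>0 \<le> \<delta>\<close>])
  have "picard_map \<delta> g u s - picard_map \<delta> g v s = integral {0..?t} (\<lambda>r. g (u r) - g (v r))"
    unfolding picard_map_def
    by (intro integral_diff[symmetric] integrable_continuous_real
        continuous_on_lipschitz_comp[OF lip u] continuous_on_lipschitz_comp[OF lip v])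
  also have "norm \<dots> \<le> (K * dist u v) * (?t - 0)"
  proof (rule integral_bound)
    show "continuous_on {0..?t} (\<lambda>r. g (u r) - g (v r))"
      by (intro continuous_intros continuous_on_lipschitz_comp[OF lip u] continuous_on_lipschitz_comp[OF lip v])
    show "norm (g (u r) - g (v r)) \<le> K * dist u v" for r
    proof -
      have "norm (g (u r) - g (v r)) \<le> K * dist (u r) (v r)"
        using lipschitz_onD[OF lip] u v by (simp add: mem_PiC_iff Pi_iff dist_norm)
      also have "\<dots> \<le> K * dist u v"
        by (rule mult_left_mono[OF dist_bounded lipschitz_on_nonneg[OF lip]])
      finally show ?thesis .
    qed
  qed (use t in auto)
  also have "\<dots> \<le> (K * dist u v) * \<delta>"
    using t lipschitz_on_nonneg[OF lip] by (simp add: mult_left_mono)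
  finally show ?thesis
    by (simp add: mult_ac)
qed

lemma picard_map_fixed_point:
  fixes g :: "'a::banach \<Rightarrow> 'a"
  assumes lip: "K-lipschitz_on (cball 0 1) g"
    and \<delta>: "0 < \<delta>" "\<delta> * (norm (g 0) + K) \<le> 1" "\<delta> * K \<le> 1/2"
  shows "\<exists>u\<in>PiC (UNIV :: real set) (\<lambda>_. cball 0 1). \<forall>s\<in>{0..\<delta>}. u s = integral {0..s} (\<lambda>r. g (u r))"
proof -
  define S where "S = PiC (UNIV :: real set) (\<lambda>_. cball (0::'a) 1)"
  define \<Phi> where "\<Phi> u = Bcontfun (picard_map \<delta> g u)" for u
  have \<Phi>_apply: "apply_bcontfun (\<Phi> u) = picard_map \<delta> g u" if "u \<in> S" for u
    using picard_map_bcontfun(1)[OF lip _ that[unfolded S_def]] \<delta>(1)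
    by (simp add: \<Phi>_def Bcontfun_inverse)
  have complete: "complete S"
    unfolding S_def by (simp add: complete_eq_closed closed_PiC)
  have "0 \<in> S"
    by (simp add: S_def mem_PiC_iff Pi_iff)
  then have nonempty: "S \<noteq> {}"
    by blast
  have invariant: "\<Phi> ` S \<subseteq> S"
  proof clarify
    fix u assume "u \<in> S"
    have "norm (picard_map \<delta> g u s) \<le> 1" for s
      using picard_map_bcontfun(2)[OF lip _ \<open>u \<in> S\<close>[unfolded S_def], of \<delta> s] \<delta> by simp
    then show "\<Phi> u \<in> S"
      using \<Phi>_apply[OF \<open>u \<in> S\<close>] by (simp add: S_def mem_PiC_iff Pi_iff)
  qed
  have contraction: "dist (\<Phi> u) (\<Phi> v) \<le> 1/2 * dist u v" if "u \<in> S" "v \<in> S" for u v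
  proof (rule dist_bound)
    fix s
    have "norm (picard_map \<delta> g u s - picard_map \<delta> g v s) \<le> \<delta> * K * dist u v"
      using norm_picard_map_diff_le[OF lip] \<delta>(1) that by (simp add: S_def)
    also have "\<dots> \<le> 1/2 * dist u v"
      using mult_right_mono[OF \<delta>(3) zero_le_dist[of u v]] by simp
    finally show "dist (\<Phi> u s) (\<Phi> v s) \<le> 1/2 * dist u v"
      using that by (simp add: \<Phi>_apply dist_norm)
  qed
  obtain u where "u \<in> S" and "\<Phi> u = u"
    using Banach_fix[OF complete nonempty _ _ invariant contraction] by auto
  have "u s = integral {0..s} (\<lambda>r. g (u r))" if "s \<in> {0..\<delta>}" for s
  proof -
    have "u s = picard_map \<delta> g u s"
      using \<Phi>_apply[OF \<open>u \<in> S\<close>] \<open>\<Phi> u = u\<close> by simp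
    then show ?thesis
      by (simp only: picard_map_def clamp_real_cancel[OF that])
  qed
  with \<open>u \<in> S\<close> show ?thesis
    unfolding S_def by blast
qed

lemma local_solution_autonomous_ode:
  fixes g :: "'a::banach \<Rightarrow> 'a"
  assumes lip: "K-lipschitz_on (cball 0 1) g"
  shows "\<exists>\<delta>>0. \<exists>u. u 0 = 0 \<and> (\<forall>s\<in>{0..\<delta>}. (u has_vector_derivative g (u s)) (at s within {0..\<delta>}))"
proof -
  define \<delta> where "\<delta> = 1 / (2 * (norm (g 0) + K + 1))"
  have K: "0 \<le> K"
    by (rule lipschitz_on_nonneg[OF lip])
  then have "0 < 2 * (norm (g 0) + K + 1)"
    by (simp add: add_nonneg_pos)
  with K have \<delta>: "0 < \<delta>" "\<delta> * (norm (g 0) + K) \<le> 1" "\<delta> * K \<le> 1/2"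
    by (simp_all add: \<delta>_def field_simps)
  then obtain u :: "real \<Rightarrow>\<^sub>C 'a" where u: "u \<in> PiC UNIV (\<lambda>_. cball 0 1)"
    and u_eq: "\<And>s. s \<in> {0..\<delta>} \<Longrightarrow> u s = integral {0..s} (\<lambda>r. g (u r))"
    using picard_map_fixed_point[OF lip] by blast
  have gu: "continuous_on {0..\<delta>} (\<lambda>r. g (u r))"
    by (rule continuous_on_lipschitz_comp[OF lip u])
  have "(u has_vector_derivative g (u s)) (at s within {0..\<delta>})" if "s \<in> {0..\<delta>}" for s
    by (rule has_vector_derivative_transform[OF that _ integral_has_vector_derivative[OF gu that]])
      (simp add: u_eq)
  moreover have "u 0 = 0"
    using u_eq[of 0] \<delta>(1) by simp
  ultimately show ?thesis
    using \<delta>(1) by blast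
qed

lemma autonomous_ode_terminal_value:
  fixes g :: "'a::banach \<Rightarrow> 'a"
  assumes "K-lipschitz_on (cball 0 1) g"
  shows "\<exists>T0>0. \<forall>T. 0 < T \<and> T \<le> T0 \<longrightarrow>
    (\<exists>y. y T = 0 \<and> (\<forall>t\<in>{0..T}. (y has_vector_derivative - g (y t)) (at t within {0..T})))"
proof -
  obtain \<delta> u where "\<delta> > 0" and "u 0 = 0"
    and u': "\<And>s. s \<in> {0..\<delta>} \<Longrightarrow> (u has_vector_derivative g (u s)) (at s within {0..\<delta>})"
    using local_solution_autonomous_ode[OF assms] by blast
  show ?thesis
  proof (intro exI[of _ \<delta>] conjI allI impI)
    fix T assume T: "0 < T \<and> T \<le> \<delta>"
    show "\<exists>y. y T = 0 \<and> (\<forall>t\<in>{0..T}. (y has_vector_derivative - g (y t)) (at t within {0..T}))"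
    proof (intro exI[of _ "\<lambda>t. u (T - t)"] conjI ballI)
      fix t assume t: "t \<in> {0..T}"
      have reflect: "((\<lambda>t. T - t) has_vector_derivative -1) (at t within {0..T})"
        by (auto intro!: derivative_eq_intros simp: has_real_derivative_iff_has_vector_derivative[symmetric])
      have "(u has_vector_derivative g (u (T - t))) (at (T - t) within (\<lambda>t. T - t) ` {0..T})"
        by (rule has_vector_derivative_within_subset[OF u']) (use t T in auto)
      from vector_diff_chain_within[OF reflect this]
      show "((\<lambda>t. u (T - t)) has_vector_derivative - g (u (T - t))) (at t within {0..T})"
        by (simp add: o_def)
    qed (simp add: \<open>u 0 = 0\<close>)
  qed (rule \<open>\<delta> > 0\<close>)
qed

section \<open>Quadratic polynomials on euclidean space\<close>

lemma inner_matrix_vector_transpose: "x \<bullet> (A *v y) = (transpose A *v x) \<bullet> (y :: real^'n)"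
  for A :: "real^'n^'m"
  by (simp add: dot_lmul_matrix)

lemma transpose_add: "transpose (A + B) = transpose A + transpose (B :: 'a::semiring_1^'n^'m)"
  by (simp add: transpose_def vec_eq_iff)

lemma matrix_add_rdistrib: "(A + B) ** C = A ** C + B ** C"
  for A B :: "'a::semiring_1^'n^'m" and C :: "'a^'k^'n"
  by (simp add: matrix_matrix_mult_def vec_eq_iff sum.distrib algebra_simps)

lemma matrix_scaleR_right: "A ** (r *\<^sub>R B) = r *\<^sub>R (A ** B)"
  for A :: "real^'n^'m" and B :: "real^'k^'n"
  by (simp add: matrix_scalar_ac scalar_matrix_assoc)

lemma trace_scaleR: "trace (r *\<^sub>R A) = r * trace A"
  for A :: "real^'n^'n"
  by (simp add: trace_def sum_distrib_left)

lemmas matrix_linear_simps = transpose_add transpose_scalar matrix_add_ldistrib matrix_add_rdistrib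
  scalar_matrix_assoc[symmetric] matrix_scaleR_right matrix_vector_mult_add_rdistrib matrix_vector_right_distrib
  matrix_vector_mult_scaleR scaleR_matrix_vector_assoc[symmetric]

type_synonym 'n quad_coeffs = "(real^'n^'n) \<times> (real^'n) \<times> real"

definition quad_poly :: "'n::finite quad_coeffs \<Rightarrow> real^'n \<Rightarrow> real"
  where "quad_poly = (\<lambda>(Q, b, c) x. x \<bullet> (Q *v x) + b \<bullet> x + c)"

lemma quad_poly_apply [simp]: "quad_poly (Q, b, c) x = x \<bullet> (Q *v x) + b \<bullet> x + c"
  by (simp add: quad_poly_def)

lemma quad_poly_zero [simp]: "quad_poly 0 x = 0"
  by (simp add: zero_prod_def)

lemma bounded_linear_quad_poly: "bounded_linear (\<lambda>z. quad_poly z x)"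
  unfolding linear_conv_bounded_linear[symmetric]
  by (rule linearI)
    (auto simp: quad_poly_def split_beta algebra_simps inner_add_left scaleR_matrix_vector_assoc[symmetric])

lemma grad_quad_poly:
  fixes Q :: "real^'n^'n"
  shows "grad (quad_poly (Q, b, c)) x = (Q + transpose Q) *v x + b"
proof -
  have "deriv (\<lambda>h. quad_poly (Q, b, c) (x + h *\<^sub>R axis i 1)) 0 = ((Q + transpose Q) *v x + b) $ i" for i
  proof -
    define e :: "real^'n" where "e = axis i 1"
    define d where "d = e \<bullet> (Q *v x) + x \<bullet> (Q *v e) + b \<bullet> e"
    have "(\<lambda>h. quad_poly (Q, b, c) (x + h *\<^sub>R e)) = (\<lambda>h. quad_poly (Q, b, c) x + h * d + h^2 * (e \<bullet> (Q *v e)))"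
      by (simp add: d_def algebra_simps inner_add_left inner_add_right power2_eq_square)
    moreover have "((\<lambda>h. quad_poly (Q, b, c) x + h * d + h^2 * (e \<bullet> (Q *v e))) has_real_derivative d) (at 0)"
      by (auto intro!: derivative_eq_intros)
    ultimately have "deriv (\<lambda>h. quad_poly (Q, b, c) (x + h *\<^sub>R e)) 0 = d"
      by (simp add: DERIV_imp_deriv)
    also have "d = ((Q + transpose Q) *v x + b) $ i"
      unfolding d_def inner_matrix_vector_transpose[of x Q]
      by (simp add: e_def inner_axis' inner_axis inner_commute matrix_vector_mult_add_rdistrib
          del: transpose_matrix_vector)
    finally show ?thesis
      unfolding e_def .
  qed
  then show ?thesis
    by (simp add: grad_def vec_eq_iff)
qed

lemma hess_quad_poly: "hess (quad_poly z) x = fst z + transpose (fst z)"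
proof -
  obtain Q b c where z: "z = (Q, b, c)"
    by (cases z)
  define G where "G = Q + transpose Q"
  have "deriv (\<lambda>h. (G *v (x + h *\<^sub>R axis j 1) + b) $ i) 0 = G $ i $ j" for i j
  proof -
    have "(\<lambda>h. (G *v (x + h *\<^sub>R axis j 1) + b) $ i) = (\<lambda>h. (G *v x + b) $ i + h * G $ i $ j)"
      by (simp add: matrix_vector_right_distrib matrix_vector_mult_basis matrix_vector_mult_scaleR
          column_def algebra_simps del: transpose_matrix_vector)
    moreover have "((\<lambda>h. (G *v x + b) $ i + h * G $ i $ j) has_real_derivative G $ i $ j) (at 0)"
      by (auto intro!: derivative_eq_intros)
    ultimately show ?thesis
      by (simp add: DERIV_imp_deriv)
  qed
  then show ?thesis
    by (simp add: z hess_def grad_quad_poly G_def[symmetric] vec_eq_iff)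
qed

section \<open>The Riccati system of a Hamilton-Jacobi equation with affine drift\<close>

lemma lipschitz_on_cball_quadratic:
  fixes A :: "'a::real_normed_vector \<Rightarrow> 'b::real_normed_vector" and B :: "'a \<Rightarrow> 'a \<Rightarrow> 'b"
  assumes A: "bounded_linear A" and B: "bounded_bilinear B"
  shows "\<exists>K. K-lipschitz_on (cball 0 1) (\<lambda>x. c + A x + B x x)"
proof -
  obtain KA where "KA > 0" and KA: "\<And>x. norm (A x) \<le> norm x * KA"
    using bounded_linear.pos_bounded[OF A] by blast
  obtain KB where "KB > 0" and KB: "\<And>x y. norm (B x y) \<le> norm x * norm y * KB"
    using bounded_bilinear.pos_bounded[OF B] by blast
  have "(KA + 2 * KB)-lipschitz_on (cball 0 1) (\<lambda>x. c + A x + B x x)"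
  proof (rule lipschitz_onI)
    fix x y :: 'a assume "x \<in> cball 0 1" "y \<in> cball 0 1"
    then have x: "norm x \<le> 1" and y: "norm y \<le> 1"
      by simp_all
    have "(c + A x + B x x) - (c + A y + B y y) = A (x - y) + B (x - y) x + B y (x - y)"
      by (simp add: linear_diff[OF bounded_linear.linear[OF A]] bounded_bilinear.diff_left[OF B]
          bounded_bilinear.diff_right[OF B] algebra_simps)
    also have "norm \<dots> \<le> norm (A (x - y)) + norm (B (x - y) x) + norm (B y (x - y))"
      by (meson norm_triangle_le order_refl add_mono)
    also have "\<dots> \<le> KA * norm (x - y) + KB * norm (x - y) + KB * norm (x - y)"
    proof (intro add_mono)
      show "norm (A (x - y)) \<le> KA * norm (x - y)"
        using KA[of "x - y"] by (simp add: mult.commute)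
      have "norm (B (x - y) x) \<le> norm (x - y) * norm x * KB"
        by (rule KB)
      also have "\<dots> \<le> KB * norm (x - y)"
        using x \<open>KB > 0\<close> mult_left_mono[OF x, of "norm (x - y)"] by (simp add: mult.commute mult_right_mono)
      finally show "norm (B (x - y) x) \<le> KB * norm (x - y)" .
      have "norm (B y (x - y)) \<le> norm y * norm (x - y) * KB"
        by (rule KB)
      also have "\<dots> \<le> KB * norm (x - y)"
        using y \<open>KB > 0\<close> mult_right_mono[OF y, of "norm (x - y)"] by (simp add: mult.commute mult_right_mono)
      finally show "norm (B y (x - y)) \<le> KB * norm (x - y)" .
    qed
    finally show "dist (c + A x + B x x) (c + A y + B y y) \<le> (KA + 2 * KB) * dist x y"
      by (simp add: dist_norm algebra_simps)
  qed (use \<open>KA > 0\<close> \<open>KB > 0\<close> in simp)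
  then show ?thesis ..
qed

lemma dt_eqI:
  assumes "0 < T" and "t \<in> {0..T}" and "((\<lambda>s. f s x) has_vector_derivative D) (at t within {0..T})"
  shows "dt T f t x = D"
  unfolding dt_def by (rule vector_derivative_within_closed_interval) (use assms in auto)

text \<open>
  The drift is a x = m - L x; in the theorem \<alpha> = \<kappa> + 1 and Ci = C^-1, but no relation
  between the parameters is needed.
\<close>
locale affine_drift_hjb =
  fixes \<alpha> \<kappa> :: real and C Ci L :: "real^'n::finite^'n" and m :: "real^'n"
begin

definition hamiltonian :: "real^'n \<Rightarrow> real^'n \<Rightarrow> real" where
  "hamiltonian x p = (\<alpha>/2) * (p \<bullet> (C *v p)) + \<alpha> * ((m - L *v x) \<bullet> p)
     + (\<kappa>/2) * ((m - L *v x) \<bullet> (Ci *v (m - L *v x)))"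

text \<open>
  The coefficients of x \<mapsto> hamiltonian x ((Q + Q^T) x + b), sorted by their degree in (Q, b, c).
\<close>
definition riccati_const :: "'n quad_coeffs" where
  "riccati_const = ((\<kappa>/2) *\<^sub>R (transpose L ** Ci ** L),
     - (\<kappa>/2) *\<^sub>R (transpose L *v ((Ci + transpose Ci) *v m)), (\<kappa>/2) * (m \<bullet> (Ci *v m)))"

definition riccati_lin :: "'n quad_coeffs \<Rightarrow> 'n quad_coeffs" where
  "riccati_lin = (\<lambda>(Q, b, c). (- \<alpha> *\<^sub>R (transpose L ** (Q + transpose Q)),
     \<alpha> *\<^sub>R ((Q + transpose Q) *v m - transpose L *v b), \<alpha> * (m \<bullet> b)))"

definition riccati_quad :: "'n quad_coeffs \<Rightarrow> 'n quad_coeffs \<Rightarrow> 'n quad_coeffs" where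
  "riccati_quad = (\<lambda>(Q, b, c) (Q', b', c'). ((\<alpha>/2) *\<^sub>R ((Q + transpose Q) ** C ** (Q' + transpose Q')),
     (\<alpha>/2) *\<^sub>R ((Q + transpose Q) *v ((C + transpose C) *v b')), (\<alpha>/2) * (b \<bullet> (C *v b'))))"

definition riccati_field :: "'n quad_coeffs \<Rightarrow> 'n quad_coeffs" where
  "riccati_field z = riccati_const + riccati_lin z + riccati_quad z z"

lemma lipschitz_riccati_field: "\<exists>K. K-lipschitz_on (cball 0 1) riccati_field"
proof -
  have "linear riccati_lin"
    by (rule linearI)
      (auto simp: riccati_lin_def split_beta matrix_linear_simps algebra_simps simp del: transpose_matrix_vector)
  moreover have "bilinear riccati_quad"
    unfolding bilinear_def
    by (auto intro!: linearI simp: riccati_quad_def split_beta matrix_linear_simps algebra_simps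
        inner_add_left inner_add_right simp del: transpose_matrix_vector)
  ultimately show ?thesis
    unfolding riccati_field_def[abs_def]
    by (intro lipschitz_on_cball_quadratic linear_conv_bounded_linear[THEN iffD1]
        bilinear_conv_bounded_bilinear[THEN iffD1])
qed

lemma riccati_field_eq:
  fixes Q :: "real^'n^'n"
  defines "G \<equiv> Q + transpose Q"
  shows "riccati_field (Q, b, c) =
      ((\<alpha>/2) *\<^sub>R (G ** C ** G) - \<alpha> *\<^sub>R (transpose L ** G) + (\<kappa>/2) *\<^sub>R (transpose L ** Ci ** L),
       (\<alpha>/2) *\<^sub>R (G *v ((C + transpose C) *v b)) + \<alpha> *\<^sub>R (G *v m - transpose L *v b)
         - (\<kappa>/2) *\<^sub>R (transpose L *v ((Ci + transpose Ci) *v m)),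
       (\<alpha>/2) * (b \<bullet> (C *v b)) + \<alpha> * (m \<bullet> b) + (\<kappa>/2) * (m \<bullet> (Ci *v m)))"
  by (simp add: riccati_field_def riccati_const_def riccati_lin_def riccati_quad_def G_def algebra_simps)

lemma quad_poly_riccati_field:
  "quad_poly (riccati_field (Q, b, c)) x = hamiltonian x ((Q + transpose Q) *v x + b)"
proof -
  define G where "G = Q + transpose Q"
  define p where "p = G *v x"
  define q where "q = L *v x"
  have G_sym: "transpose G = G"
    by (simp add: G_def transpose_add add.commute)
  have G_adj: "(G *v v) \<bullet> x = v \<bullet> p" for v
    using inner_matrix_vector_transpose[of x G v] G_sym
    by (simp add: p_def inner_commute del: transpose_matrix_vector)
  have L_adj: "(transpose L *v v) \<bullet> x = v \<bullet> q" for v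
    using inner_matrix_vector_transpose[of x "transpose L" v]
    by (simp add: q_def inner_commute del: transpose_matrix_vector)
  have GCG: "x \<bullet> ((G ** C ** G) *v x) = p \<bullet> (C *v p)"
    using inner_matrix_vector_transpose[of x G] G_sym
    by (simp add: p_def matrix_vector_mul_assoc[symmetric] del: transpose_matrix_vector)
  have LG: "x \<bullet> ((transpose L ** G) *v x) = q \<bullet> p"
    using L_adj[of p] by (simp add: p_def matrix_vector_mul_assoc[symmetric] inner_commute)
  have LCiL: "x \<bullet> ((transpose L ** Ci ** L) *v x) = q \<bullet> (Ci *v q)"
    using L_adj[of "Ci *v q"] by (simp add: q_def matrix_vector_mul_assoc[symmetric] inner_commute)
  have C_adj: "(transpose C *v b) \<bullet> p = b \<bullet> (C *v p)" and Ci_adj: "(transpose Ci *v m) \<bullet> q = m \<bullet> (Ci *v q)"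
    by (simp_all only: inner_matrix_vector_transpose[symmetric])
  have "quad_poly (riccati_field (Q, b, c)) x =
      (\<alpha>/2) * (p \<bullet> (C *v p)) - \<alpha> * (q \<bullet> p) + (\<kappa>/2) * (q \<bullet> (Ci *v q))
      + ((\<alpha>/2) * ((C *v b) \<bullet> p + b \<bullet> (C *v p)) + \<alpha> * (m \<bullet> p - b \<bullet> q)
         - (\<kappa>/2) * ((Ci *v m) \<bullet> q + m \<bullet> (Ci *v q)))
      + ((\<alpha>/2) * (b \<bullet> (C *v b)) + \<alpha> * (m \<bullet> b) + (\<kappa>/2) * (m \<bullet> (Ci *v m)))"
    unfolding riccati_field_eq G_def[symmetric] quad_poly_apply
    by (simp only: matrix_vector_mult_add_rdistrib matrix_vector_mult_diff_rdistrib
        scaleR_matrix_vector_assoc[symmetric] inner_add_right inner_diff_right inner_scaleR_right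
        inner_add_left inner_diff_left inner_scaleR_left G_adj L_adj GCG LG LCiL C_adj Ci_adj)
  also have "\<dots> = hamiltonian x (p + b)"
    by (simp add: hamiltonian_def q_def[symmetric] inner_add_left inner_add_right inner_diff_left inner_diff_right
        matrix_vector_right_distrib matrix_vector_mult_diff_distrib inner_commute algebra_simps)
  finally show ?thesis
    by (simp add: p_def G_def)
qed

lemma quad_poly_riccati_solution_has_vector_derivative:
  assumes "(y has_vector_derivative - riccati_field (y t)) (at t within S)"
  shows "((\<lambda>s. quad_poly (y s) x) has_vector_derivative - hamiltonian x (grad (quad_poly (y t)) x))
    (at t within S)"
proof -
  obtain Q b c where yt: "y t = (Q, b, c)"
    by (cases "y t")
  have "quad_poly (- riccati_field (y t)) x = - quad_poly (riccati_field (y t)) x"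
    by (rule linear_neg[OF bounded_linear.linear[OF bounded_linear_quad_poly]])
  also have "\<dots> = - hamiltonian x (grad (quad_poly (y t)) x)"
    by (simp add: yt quad_poly_riccati_field grad_quad_poly)
  finally have neg: "quad_poly (- riccati_field (y t)) x = - hamiltonian x (grad (quad_poly (y t)) x)" .
  show ?thesis
    using bounded_linear.has_vector_derivative[OF bounded_linear_quad_poly[of x] assms]
    unfolding neg .
qed

lemma riccati_solution_hjb:
  assumes T: "0 < T" and ode: "\<forall>t\<in>{0..T}. (y has_vector_derivative - riccati_field (y t)) (at t within {0..T})"
    and t: "t \<in> {0..T}"
  shows "dt T (\<lambda>t. quad_poly (y t)) t x + hamiltonian x (grad (quad_poly (y t)) x) = 0"
proof -
  have "((\<lambda>s. quad_poly (y s) x) has_vector_derivative - hamiltonian x (grad (quad_poly (y t)) x))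
      (at t within {0..T})"
    using ode t by (intro quad_poly_riccati_solution_has_vector_derivative) simp
  from dt_eqI[where f = "\<lambda>t. quad_poly (y t)", OF T t this] show ?thesis
    by simp
qed

lemma riccati_solution_viscous_hjb:
  assumes T: "0 < T" and ode: "\<forall>t\<in>{0..T}. (y has_vector_derivative - riccati_field (y t)) (at t within {0..T})"
    and t: "t \<in> {0..T}"
  defines "S \<equiv> \<lambda>t x. quad_poly (y t) x + (1/2) * integral {t..T} (\<lambda>s. trace (C ** hess (quad_poly (y s)) x))"
  shows "dt T S t x + hamiltonian x (grad (S t) x) + (1/2) * trace (C ** hess (S t) x) = 0"
proof -
  define tr where "tr z = trace (C ** (fst z + transpose (fst z)))" for z :: "'n quad_coeffs"
  define s1 where "s1 t = (1/2) * integral {t..T} (\<lambda>s. tr (y s))" for t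
  have S_eq: "S t x = quad_poly (y t) x + s1 t" for t x
    by (simp add: S_def s1_def tr_def hess_quad_poly)
  have "linear tr"
    by (rule linearI) (simp_all add: tr_def matrix_linear_simps trace_add trace_scaleR algebra_simps)
  moreover have "continuous_on {0..T} y"
    using ode by (intro continuous_on_vector_derivative) blast
  ultimately have "continuous_on {0..T} (\<lambda>s. tr (y s))"
    using continuous_on_compose[of _ y tr] linear_continuous_on by (auto simp: linear_conv_bounded_linear o_def)
  then have "(s1 has_vector_derivative - (1/2) * tr (y t)) (at t within {0..T})"
    unfolding s1_def[abs_def]
    using has_vector_derivative_mult_right[OF integral_has_vector_derivative'[OF _ t], of "\<lambda>s. tr (y s)" "1/2"]
    by simp
  with quad_poly_riccati_solution_has_vector_derivative ode t
  have "((\<lambda>s. S s x) has_vector_derivative - hamiltonian x (grad (quad_poly (y t)) x) + - (1/2) * tr (y t))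
      (at t within {0..T})"
    unfolding S_eq by (intro has_vector_derivative_add) auto
  then have "dt T S t x = - hamiltonian x (grad (quad_poly (y t)) x) - (1/2) * tr (y t)"
    using dt_eqI[OF T t] by simp
  moreover obtain Q b c where yt: "y t = (Q, b, c)"
    by (cases "y t")
  moreover have "S t = quad_poly (Q, b, c + s1 t)"
    by (auto simp: S_eq yt)
  ultimately show ?thesis
    by (simp add: tr_def grad_quad_poly hess_quad_poly)
qed

end

section \<open>The multivariate Ornstein-Uhlenbeck model\<close>

lemma differentiable_triple_components:
  assumes "y differentiable F"
  shows "(\<lambda>t. fst (y t)) differentiable F \<and> (\<lambda>t. fst (snd (y t))) differentiable F
    \<and> (\<lambda>t. snd (snd (y t))) differentiable F"
proof -
  obtain D where D: "(y has_derivative D) F"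
    using assms by (auto simp: differentiable_def)
  show ?thesis
    using has_derivative_fst[OF D] has_derivative_fst[OF has_derivative_snd[OF D]]
      has_derivative_snd[OF has_derivative_snd[OF D]]
    by (auto simp: differentiable_def)
qed

theorem mainTheorem5:
  fixes lam mubar :: "real^'n" and C :: "real^'n^'n" and \<kappa> :: real
  assumes posC: "pos_def_mat C"
    and kappa: "\<kappa> \<noteq> -1"
  defines "a \<equiv> (\<lambda>x. diag_mat lam *v (mubar - x))"
  shows "\<exists>T0>0. \<forall>T. 0 < T \<and> T \<le> T0 \<longrightarrow>
    (\<exists>(Q :: real \<Rightarrow> real^'n^'n) (b :: real \<Rightarrow> real^'n) (c :: real \<Rightarrow> real).
       (\<forall>t\<in>{0..T}. Q differentiable (at t within {0..T}) \<and>
                    b differentiable (at t within {0..T}) \<and>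
                    c differentiable (at t within {0..T})) \<and>
       (let S0 = (\<lambda>t x. x \<bullet> (Q t *v x) + b t \<bullet> x + c t);
            S1 = (\<lambda>t x. (1/2) * integral {t..T} (\<lambda>s. trace (C ** hess (S0 s) x)));
            S = (\<lambda>t x. S0 t x + S1 t x)
        in (\<forall>t\<in>{0..T}. \<forall>x.
              dt T S0 t x + ((\<kappa> + 1) / 2) * (grad (S0 t) x \<bullet> (C *v grad (S0 t) x))
              + (\<kappa> + 1) * (a x \<bullet> grad (S0 t) x)
              + (\<kappa> / 2) * (a x \<bullet> (matrix_inv C *v a x)) = 0)
         \<and> (\<forall>x. S0 T x = 0)
         \<and> (\<forall>t\<in>{0..T}. \<forall>x y. S1 t x = S1 t y)
         \<and> (\<forall>t\<in>{0..T}. \<forall>x.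
              dt T S t x + (\<kappa> + 1) * (a x \<bullet> grad (S t) x)
              + ((\<kappa> + 1) / 2) * (grad (S t) x \<bullet> (C *v grad (S t) x))
              + (\<kappa> / 2) * (a x \<bullet> (matrix_inv C *v a x))
              + (1/2) * trace (C ** hess (S t) x) = 0)
         \<and> (\<forall>x. S T x = 0)))"
proof -
  interpret affine_drift_hjb "\<kappa> + 1" \<kappa> C "matrix_inv C" "diag_mat lam" "diag_mat lam *v mubar" .
  have a_eq: "a x = diag_mat lam *v mubar - diag_mat lam *v x" for x
    by (simp add: a_def matrix_vector_mult_diff_distrib)
  obtain K where "K-lipschitz_on (cball 0 1) riccati_field"
    using lipschitz_riccati_field by blast
  then obtain T0 where "T0 > 0" and solvable: "\<forall>T. 0 < T \<and> T \<le> T0 \<longrightarrow> (\<exists>y. y T = 0 \<and>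
      (\<forall>t\<in>{0..T}. (y has_vector_derivative - riccati_field (y t)) (at t within {0..T})))"
    using autonomous_ode_terminal_value by blast
  show ?thesis
  proof (intro exI[of _ T0] conjI allI impI \<open>T0 > 0\<close>, goal_cases)
    case (1 T)
    then obtain y where "y T = 0"
      and ode: "\<forall>t\<in>{0..T}. (y has_vector_derivative - riccati_field (y t)) (at t within {0..T})"
      using solvable by blast
    define Q b c where "Q t = fst (y t)" and "b t = fst (snd (y t))" and "c t = snd (snd (y t))" for t
    have "(\<lambda>t x. x \<bullet> (Q t *v x) + b t \<bullet> x + c t) = (\<lambda>t. quad_poly (y t))"
      by (simp add: Q_def b_def c_def quad_poly_def split_beta)
    moreover have "\<forall>t\<in>{0..T}. Q differentiable (at t within {0..T}) \<and>
        b differentiable (at t within {0..T}) \<and> c differentiable (at t within {0..T})"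
      using ode differentiableI_vector differentiable_triple_components unfolding Q_def b_def c_def by blast
    ultimately show ?case
      using 1 riccati_solution_hjb[of T y] riccati_solution_viscous_hjb[of T y] ode \<open>y T = 0\<close>
      by (intro exI[of _ Q] exI[of _ b] exI[of _ c])
        (simp only: Let_def hamiltonian_def, simp add: a_eq add_ac hess_quad_poly)
  qed
qed

end
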